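(* Let $G$ be a graph whose twin graph $G^*$, with its vertex types, is one of the following: (G7) $G^*$ is $K_4-e$ with a pendant edge attached to one of its degree-3 vertices (so $G^*$ has one vertex of degree 4, one of degree 3, two of degree 2 and one leaf), where the leaf is of type (1), the degree-4 and degree-3 vertices are of type (1K), one of the degree-2 vertices is of type (K) and the other is of type (1); (G8) $G^*$ is $K_4-e$, one of its degree-2 vertices is of type (K), the other is of type (1), one of its degree-3 vertices is of type (N), and the other is of type (1K); (G9) $G^*$ is $C_4$, two adjacent vertices are of type (K) and the other two are of type (1); (G10) $G^*$ is $C_4+K_1$, two adjacent degree-3 vertices are of type (K), the degree-4 vertex is of type (1K), and the other two vertices are of type (1). Then $D(G)\neq n(G)-2$.
   Context: All graphs are finite and simple; $n(G)=|V(G)|$; $N_G(u)$ is the neighborhood of $u$; $K_4-e$ is $K_4$ with one edge deleted; $C_4$ is the 4-cycle, and the join $G+H$ is obtained from the disjoint union of $G$ and $H$ by adding all edges between $V(G)$ and $V(H)$. A distinguishing coloring of a graph $G$ is a (not necessarily proper) vertex coloring such that the only automorphism of $G$ mapping every vertex to a vertex of the same color is the identity; the distinguishing number $D(G)$ is the minimum number of colors in a distinguishing coloring of $G$. Two distinct vertices $u,v$ are twins if $N_G(u)\setminus\{v\}=N_G(v)\setminus\{u\}$. The relation $u\equiv v$ iff $u=v$ or $u,v$ are twins is an equivalence relation; the class of $v$ is denoted $v^*$. The twin graph $G^*$ has the equivalence classes as vertices, distinct classes $u^*,v^*$ being adjacent iff $uv\in E(G)$. Each class induces a complete or an edgeless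 graph. A class $v^*$ is of type (1) if $|v^*|=1$, of type (K) if $|v^*|\ge 2$ and it induces a complete graph, and of type (N) if $|v^*|\ge2$ and it induces an edgeless graph; type (1K) means type (1) or (K), type (1N) means (1) or (N), and type (KN) means (K) or (N). *)

theory Defs
  imports Main
begin

definition graph :: "'a set \<Rightarrow> ('a \<Rightarrow> 'a \<Rightarrow> bool) \<Rightarrow> bool" where
  "graph V E \<longleftrightarrow> finite V \<and> (\<forall>u v. E u v \<longrightarrow> u \<in> V \<and> v \<in> V)
     \<and> (\<forall>u v. E u v \<longrightarrow> E v u) \<and> (\<forall>u. \<not> E u u)"

definition nbr :: "'a set \<Rightarrow> ('a \<Rightarrow> 'a \<Rightarrow> bool) \<Rightarrow> 'a \<Rightarrow> 'a set" where
  "nbr V E u = {w \<in> V. E u w}"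

definition is_aut :: "'a set \<Rightarrow> ('a \<Rightarrow> 'a \<Rightarrow> bool) \<Rightarrow> ('a \<Rightarrow> 'a) \<Rightarrow> bool" where
  "is_aut V E f \<longleftrightarrow> bij_betw f V V \<and> (\<forall>u\<in>V. \<forall>v\<in>V. E u v \<longleftrightarrow> E (f u) (f v))"

definition distinguishing :: "'a set \<Rightarrow> ('a \<Rightarrow> 'a \<Rightarrow> bool) \<Rightarrow> ('a \<Rightarrow> nat) \<Rightarrow> nat \<Rightarrow> bool" where
  "distinguishing V E c k \<longleftrightarrow> c ` V \<subseteq> {..<k} \<and>
     (\<forall>f. is_aut V E f \<and> (\<forall>v\<in>V. c (f v) = c v) \<longrightarrow> (\<forall>v\<in>V. f v = v))"

definition dist_num :: "'a set \<Rightarrow> ('a \<Rightarrow> 'a \<Rightarrow> bool) \<Rightarrow> nat" where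
  "dist_num V E = (LEAST k. \<exists>c. distinguishing V E c k)"

definition twins :: "'a set \<Rightarrow> ('a \<Rightarrow> 'a \<Rightarrow> bool) \<Rightarrow> 'a \<Rightarrow> 'a \<Rightarrow> bool" where
  "twins V E u v \<longleftrightarrow> u \<in> V \<and> v \<in> V \<and> u \<noteq> v \<and> nbr V E u - {v} = nbr V E v - {u}"

definition twin_class :: "'a set \<Rightarrow> ('a \<Rightarrow> 'a \<Rightarrow> bool) \<Rightarrow> 'a \<Rightarrow> 'a set" where
  "twin_class V E v = {u \<in> V. u = v \<or> twins V E u v}"

definition twin_classes :: "'a set \<Rightarrow> ('a \<Rightarrow> 'a \<Rightarrow> bool) \<Rightarrow> 'a set set" where
  "twin_classes V E = twin_class V E ` V"

definition twin_adj :: "('a \<Rightarrow> 'a \<Rightarrow> bool) \<Rightarrow> 'a set \<Rightarrow> 'a set \<Rightarrow> bool" where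
  "twin_adj E X Y \<longleftrightarrow> X \<noteq> Y \<and> (\<exists>u\<in>X. \<exists>v\<in>Y. E u v)"

definition type1 :: "'a set \<Rightarrow> bool" where
  "type1 X \<longleftrightarrow> card X = 1"

definition typeK :: "('a \<Rightarrow> 'a \<Rightarrow> bool) \<Rightarrow> 'a set \<Rightarrow> bool" where
  "typeK E X \<longleftrightarrow> card X \<ge> 2 \<and> (\<forall>u\<in>X. \<forall>v\<in>X. u \<noteq> v \<longrightarrow> E u v)"

definition typeN :: "('a \<Rightarrow> 'a \<Rightarrow> bool) \<Rightarrow> 'a set \<Rightarrow> bool" where
  "typeN E X \<longleftrightarrow> card X \<ge> 2 \<and> (\<forall>u\<in>X. \<forall>v\<in>X. \<not> E u v)"

definition type1K :: "('a \<Rightarrow> 'a \<Rightarrow> bool) \<Rightarrow> 'a set \<Rightarrow> bool" where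
  "type1K E X \<longleftrightarrow> type1 X \<or> typeK E X"

definition pat_adj :: "(nat \<times> nat) set \<Rightarrow> nat \<Rightarrow> nat \<Rightarrow> bool" where
  "pat_adj L i j \<longleftrightarrow> (i, j) \<in> L \<or> (j, i) \<in> L"

definition twin_iso :: "'a set \<Rightarrow> ('a \<Rightarrow> 'a \<Rightarrow> bool) \<Rightarrow> (nat \<times> nat) set \<Rightarrow> nat \<Rightarrow> (nat \<Rightarrow> 'a set) \<Rightarrow> bool" where
  "twin_iso V E L m \<phi> \<longleftrightarrow> bij_betw \<phi> {..<m} (twin_classes V E) \<and>
     (\<forall>i<m. \<forall>j<m. pat_adj L i j \<longleftrightarrow> twin_adj E (\<phi> i) (\<phi> j))"

text \<open>K4-e on {0,1,2,3} (missing edge 2-3; 0,1 degree 3, 2,3 degree 2), with pendant 0-4.\<close>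
definition K4e_pendant :: "(nat \<times> nat) set" where
  "K4e_pendant = {(0,1),(0,2),(0,3),(1,2),(1,3),(0,4)}"

definition K4e :: "(nat \<times> nat) set" where
  "K4e = {(0,1),(0,2),(0,3),(1,2),(1,3)}"

definition C4 :: "(nat \<times> nat) set" where
  "C4 = {(0,1),(1,2),(2,3),(3,0)}"

definition C4_K1 :: "(nat \<times> nat) set" where
  "C4_K1 = {(0,1),(1,2),(2,3),(3,0),(0,4),(1,4),(2,4),(3,4)}"

definition caseG7 :: "'a set \<Rightarrow> ('a \<Rightarrow> 'a \<Rightarrow> bool) \<Rightarrow> bool" where
  "caseG7 V E \<longleftrightarrow> (\<exists>\<phi>. twin_iso V E K4e_pendant 5 \<phi> \<and> type1 (\<phi> 4) \<and>
     type1K E (\<phi> 0) \<and> type1K E (\<phi> 1) \<and> typeK E (\<phi> 2) \<and> type1 (\<phi> 3))"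

definition caseG8 :: "'a set \<Rightarrow> ('a \<Rightarrow> 'a \<Rightarrow> bool) \<Rightarrow> bool" where
  "caseG8 V E \<longleftrightarrow> (\<exists>\<phi>. twin_iso V E K4e 4 \<phi> \<and>
     typeN E (\<phi> 0) \<and> type1K E (\<phi> 1) \<and> typeK E (\<phi> 2) \<and> type1 (\<phi> 3))"

definition caseG9 :: "'a set \<Rightarrow> ('a \<Rightarrow> 'a \<Rightarrow> bool) \<Rightarrow> bool" where
  "caseG9 V E \<longleftrightarrow> (\<exists>\<phi>. twin_iso V E C4 4 \<phi> \<and>
     typeK E (\<phi> 0) \<and> typeK E (\<phi> 1) \<and> type1 (\<phi> 2) \<and> type1 (\<phi> 3))"

definition caseG10 :: "'a set \<Rightarrow> ('a \<Rightarrow> 'a \<Rightarrow> bool) \<Rightarrow> bool" where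
  "caseG10 V E \<longleftrightarrow> (\<exists>\<phi>. twin_iso V E C4_K1 5 \<phi> \<and>
     typeK E (\<phi> 0) \<and> typeK E (\<phi> 1) \<and> type1 (\<phi> 2) \<and> type1 (\<phi> 3) \<and> type1K E (\<phi> 4))"

end

theory Submission
  imports Defs
begin

text \<open>
  Twins can be exchanged by an automorphism, so a distinguishing colouring must give the
  vertices of each twin class distinct colours; numbering every class by \<open>0, 1, \<dots>\<close> uses
  \<open>M\<close> colours, \<open>M\<close> the size of a largest class. In each of the configurations (G7)--(G10)
  it suffices to give one or two singleton classes fresh colours \<open>M, M + 1\<close>: an automorphism
  fixing these vertices fixes every twin class setwise, because each class is obtained from
  the fixed vertices by taking neighbours or non-neighbours within unions of classes already
  known to be invariant, and by set differences. The other classes are big enough that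
  these \<open>M + 1\<close> or \<open>M + 2\<close> colours number at most \<open>n(G) - 3\<close>.
\<close>

section \<open>Twins and twin classes\<close>

lemma twins_sym: "twins V E u v \<Longrightarrow> twins V E v u"
  unfolding twins_def by blast

lemma graph_adj_sym: "graph V E \<Longrightarrow> E u v \<longleftrightarrow> E v u"
  unfolding graph_def by blast

lemma graph_adj_irrefl: "graph V E \<Longrightarrow> \<not> E u u"
  unfolding graph_def by blast

lemma graph_adj_in: "graph V E \<Longrightarrow> E u v \<Longrightarrow> v \<in> V"
  unfolding graph_def by blast

lemma twins_same_adj:
  assumes g: "graph V E" and "twins V E u v" "x \<noteq> u" "x \<noteq> v"
  shows "E u x \<longleftrightarrow> E v x"
proof -
  have "x \<in> nbr V E u \<longleftrightarrow> x \<in> nbr V E v"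
    using assms(2-4) unfolding twins_def by blast
  then show ?thesis
    unfolding nbr_def using graph_adj_in[OF g] by blast
qed

lemma twins_trans:
  assumes g: "graph V E" and uv: "twins V E u v" and vw: "twins V E v w" and "u \<noteq> w"
  shows "twins V E u w"
proof -
  have uv_ne: "u \<noteq> v" and vw_ne: "v \<noteq> w"
    using uv vw unfolding twins_def by auto
  have "E u x \<longleftrightarrow> E w x" if "x \<noteq> u" "x \<noteq> w" for x
  proof (cases "x = v")
    case True
    have "E u v \<longleftrightarrow> E w u"
      using twins_same_adj[OF g vw, of u] graph_adj_sym[OF g] uv_ne \<open>u \<noteq> w\<close> by blast
    also have "\<dots> \<longleftrightarrow> E v w"
      using twins_same_adj[OF g uv, of w] graph_adj_sym[OF g] vw_ne \<open>u \<noteq> w\<close> by blast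
    finally show ?thesis
      using True graph_adj_sym[OF g] by blast
  next
    case False
    then show ?thesis
      using that twins_same_adj[OF g uv] twins_same_adj[OF g vw] by blast
  qed
  then have "nbr V E u - {w} = nbr V E w - {u}"
    unfolding nbr_def using graph_adj_irrefl[OF g] by fastforce
  then show ?thesis
    using uv vw \<open>u \<noteq> w\<close> unfolding twins_def by blast
qed

lemma twin_class_self: "v \<in> V \<Longrightarrow> v \<in> twin_class V E v"
  unfolding twin_class_def by simp

lemma twin_class_eq:
  assumes g: "graph V E" and u: "u \<in> twin_class V E w"
  shows "twin_class V E u = twin_class V E w"
proof (cases "u = w")
  case False
  then have uw: "twins V E u w"
    using u unfolding twin_class_def by simp
  have "x = u \<or> twins V E x u \<longleftrightarrow> x = w \<or> twins V E x w" for x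
    using uw twins_trans[OF g] twins_sym by metis
  then show ?thesis
    unfolding twin_class_def by simp
qed simp

lemma twin_class_adj:
  assumes g: "graph V E" and u: "u \<in> twin_class V E w" and x: "x \<notin> twin_class V E w"
  shows "E u x \<longleftrightarrow> E w x"
proof (cases "u = w")
  case False
  then have "twins V E u w"
    using u unfolding twin_class_def by simp
  moreover from this have "x \<noteq> u" "x \<noteq> w"
    using u x twin_class_self unfolding twins_def by metis+
  ultimately show ?thesis
    using twins_same_adj[OF g] by blast
qed simp

lemma twin_iso_class:
  assumes "twin_iso V E L m \<phi>" and "i < m"
  obtains w where "w \<in> V" and "\<phi> i = twin_class V E w"
proof -
  have "\<phi> i \<in> twin_classes V E"
    using assms unfolding twin_iso_def bij_betw_def by auto
  then show ?thesis
    using that unfolding twin_classes_def by auto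
qed

lemma twin_iso_class_eq:
  assumes g: "graph V E" and "twin_iso V E L m \<phi>" and "i < m" and "v \<in> \<phi> i"
  shows "twin_class V E v = \<phi> i"
  using assms(2,3)
proof (rule twin_iso_class)
  fix w assume "\<phi> i = twin_class V E w"
  then show ?thesis
    using twin_class_eq[OF g] assms(4) by simp
qed

lemma twin_iso_subset: "twin_iso V E L m \<phi> \<Longrightarrow> i < m \<Longrightarrow> \<phi> i \<subseteq> V"
  by (rule twin_iso_class) (auto simp: twin_class_def)

lemma twin_iso_nonempty: "twin_iso V E L m \<phi> \<Longrightarrow> i < m \<Longrightarrow> \<phi> i \<noteq> {}"
  by (rule twin_iso_class) (auto dest: twin_class_self)

lemma twin_iso_Union:
  assumes "twin_iso V E L m \<phi>"
  shows "V = \<Union>(\<phi> ` {..<m})"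
proof -
  have "\<phi> ` {..<m} = twin_class V E ` V"
    using assms unfolding twin_iso_def bij_betw_def twin_classes_def by simp
  moreover have "(\<Union>v\<in>V. twin_class V E v) = V"
    using twin_class_self unfolding twin_class_def by blast
  ultimately show ?thesis
    by simp
qed

lemma twin_iso_disjoint:
  assumes g: "graph V E" and iso: "twin_iso V E L m \<phi>" and "i < m" "j < m" "v \<in> \<phi> i" "v \<in> \<phi> j"
  shows "i = j"
proof -
  have "\<phi> i = \<phi> j"
    using twin_iso_class_eq[OF g iso] assms(3-6) by metis
  then show ?thesis
    using iso \<open>i < m\<close> \<open>j < m\<close> unfolding twin_iso_def bij_betw_def inj_on_def by blast
qed

lemma twin_iso_adj:
  assumes g: "graph V E" and iso: "twin_iso V E L m \<phi>" and ij: "i < m" "j < m" "i \<noteq> j"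
    and u: "u \<in> \<phi> i" and v: "v \<in> \<phi> j"
  shows "E u v \<longleftrightarrow> pat_adj L i j"
proof -
  have class_i: "twin_class V E a = \<phi> i" if "a \<in> \<phi> i" for a
    using twin_iso_class_eq[OF g iso ij(1) that] .
  have class_j: "twin_class V E b = \<phi> j" if "b \<in> \<phi> j" for b
    using twin_iso_class_eq[OF g iso ij(2) that] .
  have apart: "a \<notin> \<phi> j" "b \<notin> \<phi> i" if "a \<in> \<phi> i" "b \<in> \<phi> j" for a b
    using that twin_iso_disjoint[OF g iso] ij by metis+
  have class_adj: "E u v \<longleftrightarrow> E u' v'" if u': "u' \<in> \<phi> i" and v': "v' \<in> \<phi> j" for u' v'
  proof -
    have "E u v \<longleftrightarrow> E u' v"
      using twin_class_adj[OF g, of u u' v] class_i[OF u'] u apart(2)[OF u v] by simp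
    also have "\<dots> \<longleftrightarrow> E v' u'"
      using twin_class_adj[OF g, of v v' u'] class_j[OF v'] v apart(1)[OF u' v] graph_adj_sym[OF g]
      by simp
    finally show ?thesis
      using graph_adj_sym[OF g] by simp
  qed
  have "\<phi> i \<noteq> \<phi> j"
    using u apart(1)[OF u v] by blast
  then have "pat_adj L i j \<longleftrightarrow> (\<exists>u'\<in>\<phi> i. \<exists>v'\<in>\<phi> j. E u' v')"
    using iso ij unfolding twin_iso_def twin_adj_def by simp
  then show ?thesis
    using class_adj u v by blast
qed

lemma twin_iso_card:
  assumes g: "graph V E" and iso: "twin_iso V E L m \<phi>"
  shows "card V = (\<Sum>i<m. card (\<phi> i))"
proof -
  have "finite (\<phi> i)" if "i < m" for i
    using g twin_iso_subset[OF iso that] finite_subset unfolding graph_def by blast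
  moreover have "\<phi> i \<inter> \<phi> j = {}" if "i < m" "j < m" "i \<noteq> j" for i j
    using that twin_iso_disjoint[OF g iso] by blast
  ultimately show ?thesis
    by (subst twin_iso_Union[OF iso]) (simp add: card_UN_disjoint)
qed

lemma two_le_card_other:
  assumes "2 \<le> card X" and "v \<in> X"
  obtains u where "u \<in> X" and "u \<noteq> v"
proof -
  have "finite X"
    using assms(1) card.infinite by fastforce
  then have "\<not> (\<forall>a\<in>X. \<forall>b\<in>X. a = b)"
    using assms(1) card_le_Suc0_iff_eq by fastforce
  then show ?thesis
    using that assms(2) by metis
qed

lemma type1_card: "type1 X \<Longrightarrow> card X = 1"
  unfolding type1_def .

lemma typeK_card: "typeK E X \<Longrightarrow> 2 \<le> card X"
  unfolding typeK_def by simp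

lemma type1K_card: "type1K E X \<Longrightarrow> 1 \<le> card X"
  unfolding type1K_def type1_def typeK_def by auto

lemma type1_obtain:
  assumes "type1 X"
  obtains x where "X = {x}"
  using assms unfolding type1_def by (auto simp: card_1_singleton_iff)

lemma type1_not_typeK: "type1 X \<Longrightarrow> \<not> typeK E X"
  unfolding type1_def typeK_def by simp

lemma type1_not_typeN: "type1 X \<Longrightarrow> \<not> typeN E X"
  unfolding type1_def typeN_def by simp

lemma typeK_not_typeN:
  assumes "typeK E X"
  shows "\<not> typeN E X"
proof -
  obtain v where "v \<in> X"
    using assms unfolding typeK_def by fastforce
  moreover obtain u where "u \<in> X" "u \<noteq> v"
    using assms calculation two_le_card_other unfolding typeK_def by metis
  ultimately show ?thesis
    using assms unfolding typeK_def typeN_def by blast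
qed

lemma type1K_cases: "type1K E X \<Longrightarrow> type1 X \<or> typeK E X \<or> typeN E X"
  unfolding type1K_def by blast

lemma type1K_not_typeN: "type1K E X \<Longrightarrow> \<not> typeN E X"
  unfolding type1K_def using type1_not_typeN typeK_not_typeN by blast

lemma class_partner:
  assumes "type1 X \<or> typeK E X \<or> typeN E X" and v: "v \<in> X"
  shows "(\<exists>u\<in>X. u \<noteq> v \<and> E v u = b) \<longleftrightarrow> (if b then typeK E X else typeN E X)"
  using assms(1)
proof (elim disjE)
  assume "type1 X"
  moreover from this have "X = {v}"
    using v unfolding type1_def by (auto simp: card_1_singleton_iff)
  ultimately show ?thesis
    using type1_not_typeK type1_not_typeN by auto
next
  assume K: "typeK E X"
  then obtain u where "u \<in> X" "u \<noteq> v"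
    using v two_le_card_other unfolding typeK_def by metis
  then show ?thesis
    using K v typeK_not_typeN unfolding typeK_def by auto
next
  assume N: "typeN E X"
  then obtain u where "u \<in> X" "u \<noteq> v"
    using v two_le_card_other unfolding typeN_def by metis
  then show ?thesis
    using N v typeK_not_typeN unfolding typeN_def by auto
qed

section \<open>Colourings numbering each twin class\<close>

definition enum_rank :: "'a set \<Rightarrow> 'a \<Rightarrow> nat" where
  "enum_rank X = (SOME r. bij_betw r X {..<card X})"

lemma enum_rank_bij:
  assumes "finite X"
  shows "bij_betw (enum_rank X) X {..<card X}"
proof -
  have "\<exists>r. bij_betw r X {..<card X}"
    using ex_bij_betw_finite_nat[OF assms] by (simp add: atLeast0LessThan)
  then show ?thesis
    unfolding enum_rank_def by (rule someI_ex)
qed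

definition marked_coloring :: "'a set \<Rightarrow> ('a \<Rightarrow> 'a \<Rightarrow> bool) \<Rightarrow> nat \<Rightarrow> 'a list \<Rightarrow> 'a \<Rightarrow> nat" where
  "marked_coloring V E M ws v =
     (if v \<in> set ws then M + inv_into {..<length ws} ((!) ws) v
      else enum_rank (twin_class V E v) v)"

lemma distinguishing_marked_coloring:
  assumes g: "graph V E"
    and M: "\<forall>v\<in>V. card (twin_class V E v) \<le> M"
    and ws: "distinct ws" "set ws \<subseteq> V"
    and pinned: "\<And>f. is_aut V E f \<Longrightarrow> \<forall>w\<in>set ws. f w = w \<Longrightarrow> \<forall>v\<in>V. f v \<in> twin_class V E v"
  shows "distinguishing V E (marked_coloring V E M ws) (M + length ws)"
proof -
  let ?c = "marked_coloring V E M ws"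
  let ?idx = "inv_into {..<length ws} ((!) ws)"
  have idx: "bij_betw ?idx (set ws) {..<length ws}"
    using bij_betw_inv_into[OF bij_betw_nth[OF ws(1) refl refl]] .
  have rank: "bij_betw (enum_rank (twin_class V E v)) (twin_class V E v) {..<card (twin_class V E v)}"
    if "v \<in> V" for v
    using g finite_subset[of "twin_class V E v" V] enum_rank_bij
    unfolding graph_def twin_class_def by blast
  have unmarked_lt: "?c v < M" if "v \<in> V" "v \<notin> set ws" for v
  proof -
    have "?c v < card (twin_class V E v)"
      using that bij_betwE[OF rank[OF that(1)]] twin_class_self[OF that(1)]
      unfolding marked_coloring_def by simp
    then show ?thesis
      using M that(1) by (meson less_le_trans)
  qed
  have marked_ge: "?c v = M + ?idx v" if "v \<in> set ws" for v
    using that unfolding marked_coloring_def by simp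
  show ?thesis
    unfolding distinguishing_def
  proof (intro conjI allI impI)
    show "?c ` V \<subseteq> {..<M + length ws}"
      using unmarked_lt marked_ge bij_betwE[OF idx] by fastforce
  next
    fix f assume "is_aut V E f \<and> (\<forall>v\<in>V. ?c (f v) = ?c v)"
    then have f: "is_aut V E f" and fc: "\<forall>v\<in>V. ?c (f v) = ?c v"
      by auto
    have fV: "f v \<in> V" if "v \<in> V" for v
      using f that unfolding is_aut_def bij_betw_def by blast
    have marked_iff: "f v \<in> set ws \<longleftrightarrow> v \<in> set ws" if "v \<in> V" for v
      using fc[rule_format, OF that] fV[OF that] that unmarked_lt marked_ge
      by (metis le_add1 not_le)
    have marked_fixed: "f w = w" if "w \<in> set ws" for w
    proof -
      have w: "w \<in> V"
        using that ws(2) by blast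
      then have fw: "f w \<in> set ws"
        using marked_iff that by blast
      have "?idx (f w) = ?idx w"
        using fc w marked_ge[OF fw] marked_ge[OF that] by simp
      then show ?thesis
        using idx fw that unfolding bij_betw_def inj_on_def by blast
    qed
    then have own_class: "\<forall>v\<in>V. f v \<in> twin_class V E v"
      using pinned[OF f] by blast
    show "\<forall>v\<in>V. f v = v"
    proof
      fix v assume v: "v \<in> V"
      show "f v = v"
      proof (cases "v \<in> set ws")
        case True
        then show ?thesis
          using marked_fixed by blast
      next
        case False
        have same_class: "twin_class V E (f v) = twin_class V E v"
          using twin_class_eq[OF g] own_class v by blast
        have "enum_rank (twin_class V E v) (f v) = enum_rank (twin_class V E v) v"
          using fc v False marked_iff[OF v] same_class unfolding marked_coloring_def by auto
        then show ?thesis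
          using rank[OF v] own_class v twin_class_self[OF v] unfolding bij_betw_def inj_on_def by blast
      qed
    qed
  qed
qed

section \<open>Sets invariant under an automorphism\<close>

definition invariant_under :: "'a set \<Rightarrow> ('a \<Rightarrow> 'a) \<Rightarrow> 'a set \<Rightarrow> bool" where
  "invariant_under V f S \<longleftrightarrow> (\<forall>v\<in>V. f v \<in> S \<longleftrightarrow> v \<in> S)"

definition linked :: "('a \<Rightarrow> 'a \<Rightarrow> bool) \<Rightarrow> bool \<Rightarrow> 'a set \<Rightarrow> 'a set \<Rightarrow> 'a set" where
  "linked E b S T = {v \<in> S. \<exists>u\<in>T. u \<noteq> v \<and> E v u = b}"

lemma invariant_under_Diff:
  "invariant_under V f S \<Longrightarrow> invariant_under V f T \<Longrightarrow> invariant_under V f (S - T)"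
  unfolding invariant_under_def by blast

lemma invariant_under_fixed_point:
  "is_aut V E f \<Longrightarrow> x \<in> V \<Longrightarrow> f x = x \<Longrightarrow> invariant_under V f {x}"
  unfolding invariant_under_def is_aut_def bij_betw_def inj_on_def by auto

lemma invariant_under_linked:
  assumes f: "is_aut V E f" and S: "invariant_under V f S" and T: "invariant_under V f T" "T \<subseteq> V"
  shows "invariant_under V f (linked E b S T)"
  unfolding invariant_under_def
proof (intro ballI iffI)
  fix v assume v: "v \<in> V" and "f v \<in> linked E b S T"
  then obtain u where u: "u \<in> T" "u \<noteq> f v" "E (f v) u = b" and "f v \<in> S"
    unfolding linked_def by blast
  obtain u' where u': "u' \<in> V" "u = f u'"
    using f u(1) T(2) unfolding is_aut_def bij_betw_def by blast
  have "u' \<in> T" "u' \<noteq> v" "E v u' = b"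
    using T(1) u u' v f unfolding invariant_under_def is_aut_def by auto
  then show "v \<in> linked E b S T"
    using S v \<open>f v \<in> S\<close> unfolding invariant_under_def linked_def by blast
next
  fix v assume v: "v \<in> V" and "v \<in> linked E b S T"
  then obtain u where u: "u \<in> T" "u \<noteq> v" "E v u = b" and "v \<in> S"
    unfolding linked_def by blast
  have "f u \<in> T" "f u \<noteq> f v" "E (f v) (f u) = b"
    using T u v f unfolding invariant_under_def is_aut_def bij_betw_def inj_on_def by auto
  then show "f v \<in> linked E b S T"
    using S v \<open>v \<in> S\<close> unfolding invariant_under_def linked_def by blast
qed

lemma linked_classes:
  assumes g: "graph V E" and iso: "twin_iso V E L m \<phi>" and I: "I \<subseteq> {..<m}" and J: "J \<subseteq> {..<m}"
    and types: "\<forall>i\<in>I \<inter> J. type1 (\<phi> i) \<or> typeK E (\<phi> i) \<or> typeN E (\<phi> i)"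
  shows "linked E b (\<Union>(\<phi> ` I)) (\<Union>(\<phi> ` J)) =
    \<Union>(\<phi> ` {i\<in>I. (\<exists>j\<in>J. j \<noteq> i \<and> pat_adj L i j = b) \<or>
                   (i \<in> J \<and> (if b then typeK E (\<phi> i) else typeN E (\<phi> i)))})"
proof -
  have partner: "(\<exists>u\<in>\<Union>(\<phi> ` J). u \<noteq> v \<and> E v u = b) \<longleftrightarrow>
      (\<exists>j\<in>J. j \<noteq> i \<and> pat_adj L i j = b) \<or> (i \<in> J \<and> (if b then typeK E (\<phi> i) else typeN E (\<phi> i)))"
    if i: "i \<in> I" and v: "v \<in> \<phi> i" for i v
  proof -
    have other: "(\<exists>u\<in>\<phi> j. u \<noteq> v \<and> E v u = b) \<longleftrightarrow> pat_adj L i j = b"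
      if "j \<in> J" "j \<noteq> i" for j
    proof -
      have "u \<noteq> v \<and> E v u = b \<longleftrightarrow> pat_adj L i j = b" if "u \<in> \<phi> j" for u
        using twin_iso_adj[OF g iso, of i j v u] twin_iso_disjoint[OF g iso, of i j v]
          \<open>j \<in> J\<close> \<open>j \<noteq> i\<close> i v I J that by blast
      then show ?thesis
        using twin_iso_nonempty[OF iso, of j] \<open>j \<in> J\<close> J by blast
    qed
    have own: "(\<exists>u\<in>\<phi> i. u \<noteq> v \<and> E v u = b) \<longleftrightarrow> (if b then typeK E (\<phi> i) else typeN E (\<phi> i))"
      if "i \<in> J"
      using class_partner[OF _ v] types i that by blast
    have "(\<exists>u\<in>\<Union>(\<phi> ` J). u \<noteq> v \<and> E v u = b) \<longleftrightarrow>
        (\<exists>j\<in>J. j \<noteq> i \<and> (\<exists>u\<in>\<phi> j. u \<noteq> v \<and> E v u = b)) \<or>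
        (i \<in> J \<and> (\<exists>u\<in>\<phi> i. u \<noteq> v \<and> E v u = b))"
      by auto
    also have "\<dots> \<longleftrightarrow> (\<exists>j\<in>J. j \<noteq> i \<and> pat_adj L i j = b) \<or>
        (i \<in> J \<and> (if b then typeK E (\<phi> i) else typeN E (\<phi> i)))"
      using other own by (smt (verit))
    finally show ?thesis .
  qed
  have filter: "{v \<in> \<Union>(\<phi> ` I). Q v} = \<Union>(\<phi> ` {i\<in>I. C i})"
    if "\<And>i v. i \<in> I \<Longrightarrow> v \<in> \<phi> i \<Longrightarrow> Q v \<longleftrightarrow> C i" for Q C
    using that by blast
  show ?thesis
    unfolding linked_def by (rule filter) (rule partner)
qed

lemma invariant_classes_all:
  assumes "twin_iso V E L m \<phi>" and "is_aut V E f"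
  shows "invariant_under V f (\<Union>(\<phi> ` {..<m}))"
proof -
  have "f v \<in> V" if "v \<in> V" for v
    using assms(2) that unfolding is_aut_def bij_betw_def by blast
  then show ?thesis
    unfolding twin_iso_Union[OF assms(1), symmetric] invariant_under_def by blast
qed

lemma invariant_classes_fixed_point:
  assumes "twin_iso V E L m \<phi>" and "is_aut V E f" and "k < m" and "\<phi> k = {x}" and "f x = x"
  shows "invariant_under V f (\<Union>(\<phi> ` {k}))"
  using invariant_under_fixed_point[OF assms(2) _ assms(5)] twin_iso_subset[OF assms(1,3)] assms(4)
  by simp

lemma invariant_classes_Diff:
  assumes g: "graph V E" and iso: "twin_iso V E L m \<phi>" and "I \<subseteq> {..<m}" "J \<subseteq> {..<m}"
    and "invariant_under V f (\<Union>(\<phi> ` I))" "invariant_under V f (\<Union>(\<phi> ` J))"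
    and "K = I - J"
  shows "invariant_under V f (\<Union>(\<phi> ` K))"
proof -
  have "\<Union>(\<phi> ` I) - \<Union>(\<phi> ` J) = \<Union>(\<phi> ` K)"
    using assms(3,4,7) twin_iso_disjoint[OF g iso] by blast
  then show ?thesis
    using invariant_under_Diff[OF assms(5,6)] by simp
qed

lemma invariant_classes_linked:
  assumes g: "graph V E" and iso: "twin_iso V E L m \<phi>" and f: "is_aut V E f"
    and I: "I \<subseteq> {..<m}" and J: "J \<subseteq> {..<m}"
    and types: "\<forall>i\<in>I \<inter> J. type1 (\<phi> i) \<or> typeK E (\<phi> i) \<or> typeN E (\<phi> i)"
    and "invariant_under V f (\<Union>(\<phi> ` I))" "invariant_under V f (\<Union>(\<phi> ` J))"
    and K: "K = {i\<in>I. (\<exists>j\<in>J. j \<noteq> i \<and> pat_adj L i j = b) \<or>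
                   (i \<in> J \<and> (if b then typeK E (\<phi> i) else typeN E (\<phi> i)))}"
  shows "invariant_under V f (\<Union>(\<phi> ` K))"
proof -
  have "\<Union>(\<phi> ` J) \<subseteq> V"
    using J twin_iso_subset[OF iso] by blast
  then have "invariant_under V f (linked E b (\<Union>(\<phi> ` I)) (\<Union>(\<phi> ` J)))"
    using invariant_under_linked[OF f assms(7,8)] by blast
  then show ?thesis
    unfolding K linked_classes[OF g iso I J types] .
qed

lemma dist_num_le_by_pinning:
  assumes g: "graph V E" and iso: "twin_iso V E L m \<phi>" and "0 < m"
    and ws: "distinct ws" "set ws \<subseteq> V"
    and pin: "\<And>f. is_aut V E f \<Longrightarrow> \<forall>w\<in>set ws. f w = w \<Longrightarrow> \<forall>i\<in>{..<m}. invariant_under V f (\<phi> i)"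
    and big: "\<forall>k\<in>{..<m}. card (\<phi> k) + length ws + d \<le> (\<Sum>i<m. card (\<phi> i))"
  shows "dist_num V E + d \<le> card V"
proof -
  define M where "M = Max ((\<lambda>i. card (\<phi> i)) ` {..<m})"
  have in_class: "\<exists>i<m. v \<in> \<phi> i \<and> twin_class V E v = \<phi> i" if "v \<in> V" for v
    using that twin_iso_Union[OF iso] twin_iso_class_eq[OF g iso] by blast
  have "card (\<phi> i) \<le> M" if "i < m" for i
    unfolding M_def using that by (intro Max_ge) auto
  then have "\<forall>v\<in>V. card (twin_class V E v) \<le> M"
    using in_class by fastforce
  moreover have "\<forall>v\<in>V. f v \<in> twin_class V E v"
    if "is_aut V E f" "\<forall>w\<in>set ws. f w = w" for f
  proof
    fix v assume "v \<in> V"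
    then obtain i where "i < m" "v \<in> \<phi> i" "twin_class V E v = \<phi> i"
      using in_class by blast
    then show "f v \<in> twin_class V E v"
      using pin[OF that] \<open>v \<in> V\<close> unfolding invariant_under_def by blast
  qed
  ultimately have "distinguishing V E (marked_coloring V E M ws) (M + length ws)"
    using distinguishing_marked_coloring[OF g _ ws] by blast
  then have "dist_num V E \<le> M + length ws"
    unfolding dist_num_def by (intro Least_le) blast
  moreover have "M \<in> (\<lambda>i. card (\<phi> i)) ` {..<m}"
    unfolding M_def using \<open>0 < m\<close> by (intro Max_in) auto
  then obtain k where "k < m" "M = card (\<phi> k)"
    by blast
  moreover have "card (\<phi> k) + length ws + d \<le> card V"
    using big \<open>k < m\<close> twin_iso_card[OF g iso] by simp
  ultimately show ?thesis
    by linarith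
qed

section \<open>The four configurations\<close>

lemma dist_num_caseG7:
  assumes g: "graph V E" and iso: "twin_iso V E K4e_pendant 5 \<phi>"
    and types: "type1 (\<phi> 4)" "type1K E (\<phi> 0)" "type1K E (\<phi> 1)" "typeK E (\<phi> 2)" "type1 (\<phi> 3)"
  shows "dist_num V E + 3 \<le> card V"
proof -
  obtain y where y: "\<phi> 3 = {y}"
    using types(5) by (rule type1_obtain)
  have five: "{..<5::nat} = {0, 1, 2, 3, 4}"
    by auto
  have not_K: "\<not> typeK E (\<phi> 3)" "\<not> typeK E (\<phi> 4)"
    using types type1_not_typeK by blast+
  show ?thesis
  proof (rule dist_num_le_by_pinning[OF g iso, of "[y]"])
    show "set [y] \<subseteq> V"
      using twin_iso_subset[OF iso, of 3] y by simp
  next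
    fix f assume f: "is_aut V E f" and "\<forall>w\<in>set [y]. f w = w"
    then have "f y = y" by simp
    note linked = invariant_classes_linked[OF g iso f]
    note diff = invariant_classes_Diff[OF g iso]
    have all: "invariant_under V f (\<Union>(\<phi> ` {0, 1, 2, 3, 4}))"
      using invariant_classes_all[OF iso f] by (simp add: five)
    have c3: "invariant_under V f (\<Union>(\<phi> ` {3}))"
      by (rule invariant_classes_fixed_point[OF iso f _ y \<open>f y = y\<close>]) simp
    have c01: "invariant_under V f (\<Union>(\<phi> ` {0, 1}))"
      by (rule linked[OF _ _ _ all c3, where b = True])
        (auto simp: K4e_pendant_def pat_adj_def not_K types)
    have c24: "invariant_under V f (\<Union>(\<phi> ` {2, 4}))"
      by (rule diff[OF _ _ diff[OF _ _ all c01 refl] c3]) auto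
    have c2: "invariant_under V f (\<Union>(\<phi> ` {2}))"
      by (rule linked[OF _ _ _ c24 c24, where b = True])
        (auto simp: K4e_pendant_def pat_adj_def not_K types)
    have c4: "invariant_under V f (\<Union>(\<phi> ` {4}))"
      by (rule diff[OF _ _ c24 c2]) auto
    have c0: "invariant_under V f (\<Union>(\<phi> ` {0}))"
      by (rule linked[OF _ _ _ all c4, where b = True])
        (auto simp: K4e_pendant_def pat_adj_def not_K types)
    have c1: "invariant_under V f (\<Union>(\<phi> ` {1}))"
      by (rule diff[OF _ _ c01 c0]) auto
    show "\<forall>i\<in>{..<5}. invariant_under V f (\<phi> i)"
      using c0 c1 c2 c3 c4 by (auto simp: five)
  next
    show "\<forall>k\<in>{..<5}. card (\<phi> k) + length [y] + 3 \<le> (\<Sum>i<5. card (\<phi> i))"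
      using type1_card[OF types(1)] type1K_card[OF types(2)] type1K_card[OF types(3)]
        typeK_card[OF types(4)] type1_card[OF types(5)]
      by (simp add: five)
  qed simp_all
qed

lemma dist_num_caseG8:
  assumes g: "graph V E" and iso: "twin_iso V E K4e 4 \<phi>"
    and types: "typeN E (\<phi> 0)" "type1K E (\<phi> 1)" "typeK E (\<phi> 2)" "type1 (\<phi> 3)"
  shows "dist_num V E + 3 \<le> card V"
proof -
  obtain y where y: "\<phi> 3 = {y}"
    using types(4) by (rule type1_obtain)
  have four: "{..<4::nat} = {0, 1, 2, 3}"
    by auto
  have not_KN: "\<not> typeK E (\<phi> 3)" "\<not> typeN E (\<phi> 1)"
    using types type1_not_typeK type1K_not_typeN by blast+
  show ?thesis
  proof (rule dist_num_le_by_pinning[OF g iso, of "[y]"])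
    show "set [y] \<subseteq> V"
      using twin_iso_subset[OF iso, of 3] y by simp
  next
    fix f assume f: "is_aut V E f" and "\<forall>w\<in>set [y]. f w = w"
    then have "f y = y" by simp
    note linked = invariant_classes_linked[OF g iso f]
    note diff = invariant_classes_Diff[OF g iso]
    have all: "invariant_under V f (\<Union>(\<phi> ` {0, 1, 2, 3}))"
      using invariant_classes_all[OF iso f] by (simp add: four)
    have c3: "invariant_under V f (\<Union>(\<phi> ` {3}))"
      by (rule invariant_classes_fixed_point[OF iso f _ y \<open>f y = y\<close>]) simp
    have c01: "invariant_under V f (\<Union>(\<phi> ` {0, 1}))"
      by (rule linked[OF _ _ _ all c3, where b = True])
        (auto simp: K4e_def pat_adj_def not_KN types)
    have c0: "invariant_under V f (\<Union>(\<phi> ` {0}))"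
      by (rule linked[OF _ _ _ c01 c01, where b = False])
        (use type1K_cases[OF types(2)] in \<open>auto simp: K4e_def pat_adj_def not_KN[simplified] types\<close>)
    have c1: "invariant_under V f (\<Union>(\<phi> ` {1}))"
      by (rule diff[OF _ _ c01 c0]) auto
    have c2: "invariant_under V f (\<Union>(\<phi> ` {2}))"
      by (rule diff[OF _ _ diff[OF _ _ all c01 refl] c3]) auto
    show "\<forall>i\<in>{..<4}. invariant_under V f (\<phi> i)"
      using c0 c1 c2 c3 by (auto simp: four)
  next
    show "\<forall>k\<in>{..<4}. card (\<phi> k) + length [y] + 3 \<le> (\<Sum>i<4. card (\<phi> i))"
      using typeK_card[OF types(3)] type1K_card[OF types(2)] type1_card[OF types(4)] types(1)
      unfolding typeN_def by (simp add: four)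
  qed simp_all
qed

lemma dist_num_caseG9:
  assumes g: "graph V E" and iso: "twin_iso V E C4 4 \<phi>"
    and types: "typeK E (\<phi> 0)" "typeK E (\<phi> 1)" "type1 (\<phi> 2)" "type1 (\<phi> 3)"
  shows "dist_num V E + 3 \<le> card V"
proof -
  obtain x where x: "\<phi> 2 = {x}"
    using types(3) by (rule type1_obtain)
  have four: "{..<4::nat} = {0, 1, 2, 3}"
    by auto
  have not_K: "\<not> typeK E (\<phi> 2)" "\<not> typeK E (\<phi> 3)"
    using types type1_not_typeK by blast+
  show ?thesis
  proof (rule dist_num_le_by_pinning[OF g iso, of "[x]"])
    show "set [x] \<subseteq> V"
      using twin_iso_subset[OF iso, of 2] x by simp
  next
    fix f assume f: "is_aut V E f" and "\<forall>w\<in>set [x]. f w = w"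
    then have "f x = x" by simp
    note linked = invariant_classes_linked[OF g iso f]
    note diff = invariant_classes_Diff[OF g iso]
    have all: "invariant_under V f (\<Union>(\<phi> ` {0, 1, 2, 3}))"
      using invariant_classes_all[OF iso f] by (simp add: four)
    have c2: "invariant_under V f (\<Union>(\<phi> ` {2}))"
      by (rule invariant_classes_fixed_point[OF iso f _ x \<open>f x = x\<close>]) simp
    have c13: "invariant_under V f (\<Union>(\<phi> ` {1, 3}))"
      by (rule linked[OF _ _ _ all c2, where b = True])
        (auto simp: C4_def pat_adj_def not_K types[simplified])
    have c0: "invariant_under V f (\<Union>(\<phi> ` {0}))"
      by (rule diff[OF _ _ diff[OF _ _ all c13 refl] c2]) auto
    have c1: "invariant_under V f (\<Union>(\<phi> ` {1}))"
      by (rule linked[OF _ _ _ c13 c13, where b = True])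
        (auto simp: C4_def pat_adj_def not_K types[simplified])
    have c3: "invariant_under V f (\<Union>(\<phi> ` {3}))"
      by (rule diff[OF _ _ c13 c1]) auto
    show "\<forall>i\<in>{..<4}. invariant_under V f (\<phi> i)"
      using c0 c1 c2 c3 by (auto simp: four)
  next
    show "\<forall>k\<in>{..<4}. card (\<phi> k) + length [x] + 3 \<le> (\<Sum>i<4. card (\<phi> i))"
      using typeK_card[OF types(1)] typeK_card[OF types(2)]
        type1_card[OF types(3)] type1_card[OF types(4)]
      by (simp add: four)
  qed simp_all
qed

lemma dist_num_caseG10:
  assumes g: "graph V E" and iso: "twin_iso V E C4_K1 5 \<phi>"
    and types: "typeK E (\<phi> 0)" "typeK E (\<phi> 1)" "type1 (\<phi> 2)" "type1 (\<phi> 3)" "type1K E (\<phi> 4)"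
  shows "dist_num V E + 3 \<le> card V"
proof -
  obtain x where x: "\<phi> 2 = {x}"
    using types(3) by (rule type1_obtain)
  obtain y where y: "\<phi> 3 = {y}"
    using types(4) by (rule type1_obtain)
  have five: "{..<5::nat} = {0, 1, 2, 3, 4}"
    by auto
  have not_K: "\<not> typeK E (\<phi> 2)" "\<not> typeK E (\<phi> 3)"
    using types type1_not_typeK by blast+
  show ?thesis
  proof (rule dist_num_le_by_pinning[OF g iso, of "[x, y]"])
    show "distinct [x, y]"
      using twin_iso_disjoint[OF g iso, of 2 3 x] x y by auto
    show "set [x, y] \<subseteq> V"
      using twin_iso_subset[OF iso, of 2] twin_iso_subset[OF iso, of 3] x y by simp
  next
    fix f assume f: "is_aut V E f" and "\<forall>w\<in>set [x, y]. f w = w"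
    then have "f x = x" "f y = y" by simp_all
    note linked = invariant_classes_linked[OF g iso f]
    note diff = invariant_classes_Diff[OF g iso]
    have all: "invariant_under V f (\<Union>(\<phi> ` {0, 1, 2, 3, 4}))"
      using invariant_classes_all[OF iso f] by (simp add: five)
    have c2: "invariant_under V f (\<Union>(\<phi> ` {2}))"
      by (rule invariant_classes_fixed_point[OF iso f _ x \<open>f x = x\<close>]) simp
    have c3: "invariant_under V f (\<Union>(\<phi> ` {3}))"
      by (rule invariant_classes_fixed_point[OF iso f _ y \<open>f y = y\<close>]) simp
    have c134: "invariant_under V f (\<Union>(\<phi> ` {1, 3, 4}))"
      by (rule linked[OF _ _ _ all c2, where b = True])
        (auto simp: C4_K1_def pat_adj_def not_K types)
    have c024: "invariant_under V f (\<Union>(\<phi> ` {0, 2, 4}))"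
      by (rule linked[OF _ _ _ all c3, where b = True])
        (auto simp: C4_K1_def pat_adj_def not_K types)
    have c0: "invariant_under V f (\<Union>(\<phi> ` {0}))"
      by (rule diff[OF _ _ diff[OF _ _ c024 c134 refl] c2]) auto
    have c1: "invariant_under V f (\<Union>(\<phi> ` {1}))"
      by (rule diff[OF _ _ diff[OF _ _ c134 c024 refl] c3]) auto
    have c4: "invariant_under V f (\<Union>(\<phi> ` {4}))"
      by (rule diff[OF _ _ diff[OF _ _ c134 c1 refl] c3]) auto
    show "\<forall>i\<in>{..<5}. invariant_under V f (\<phi> i)"
      using c0 c1 c2 c3 c4 by (auto simp: five)
  next
    show "\<forall>k\<in>{..<5}. card (\<phi> k) + length [x, y] + 3 \<le> (\<Sum>i<5. card (\<phi> i))"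
      using typeK_card[OF types(1)] typeK_card[OF types(2)] type1_card[OF types(3)]
        type1_card[OF types(4)] type1K_card[OF types(5)]
      by (simp add: five)
  qed simp_all
qed

theorem lemma4p10:
  fixes V :: "'a set" and E :: "'a \<Rightarrow> 'a \<Rightarrow> bool"
  assumes "graph V E"
    and "caseG7 V E \<or> caseG8 V E \<or> caseG9 V E \<or> caseG10 V E"
  shows "int (dist_num V E) \<noteq> int (card V) - 2"
proof -
  have "dist_num V E + 3 \<le> card V"
    using assms(2)
  proof (elim disjE)
    assume "caseG7 V E"
    then show ?thesis
      unfolding caseG7_def using dist_num_caseG7[OF assms(1)] by blast
  next
    assume "caseG8 V E"
    then show ?thesis
      unfolding caseG8_def using dist_num_caseG8[OF assms(1)] by blast
  next
    assume "caseG9 V E"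
    then show ?thesis
      unfolding caseG9_def using dist_num_caseG9[OF assms(1)] by blast
  next
    assume "caseG10 V E"
    then show ?thesis
      unfolding caseG10_def using dist_num_caseG10[OF assms(1)] by blast
  qed
  then show ?thesis
    by linarith
qed

end
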